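(* Let $p_S$ be the critical probability of bond percolation on the non-p.c.f. Sierpinski gasket $S$, as defined in the context. Then $p_S<0.282$.
   Context: Non-p.c.f. Sierpinski gasket: $S_0$ is the triangle $\{v_0,v_1,v_2\}$ with its three edges. $S_n$ is obtained from $S_{n-1}$ by replacing each triangle $\{x,y,z\}$ of $S_{n-1}$, together with its own three edges, by new vertices $m_{xy},m_{yz},m_{zx},c$ belonging only to this triangle and the six triangles $\{x,m_{xy},c\},\{m_{xy},y,c\},\{y,m_{yz},c\},\{m_{yz},z,c\},\{z,m_{zx},c\},\{m_{zx},x,c\}$, each carrying its own three edges. Thus distinct triangles have disjoint edge sets and parallel edges occur. For example, $S_1$ has the $6$ outer edges once and each of the $6$ segments from the center $c$ to the outer vertices doubled. $S$ denotes the limiting graph. Bond percolation with parameter $p$: each edge receives an i.i.d. uniform $[0,1]$ label $\omega(e)$ and is open if $\omega(e)<p$. Define $p_S=\sup\{p\in[0,1]:\mathbb{P}_p(\text{there is an open path from } v_0 \text{ to } v_1 \text{ in } S_n)\to 0 \text{ as } n\to\infty\}$. *)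

theory Defs
  imports "HOL-Probability.Probability"
begin

text \<open>Corner i (i < 3) is the original vertex v_i.  New w k (k < 4) is a vertex created
  when subdividing the triangle with address w: k = 0,1,2 are m_xy, m_yz, m_zx and
  k = 3 is the centre c.\<close>
datatype sg_vert = Corner nat | New "nat list" nat

text \<open>Triangles of S_n are addressed by words w over {0..5} of length n; the head of
  the list is the most recent subdivision choice.  sg_tri w = (x,y,z).\<close>
fun sg_child :: "nat list \<Rightarrow> nat \<Rightarrow> sg_vert \<times> sg_vert \<times> sg_vert \<Rightarrow> sg_vert \<times> sg_vert \<times> sg_vert" where
  "sg_child w i (x, y, z) =
     (let mxy = New w 0; myz = New w 1; mzx = New w 2; c = New w 3 in
      if i = 0 then (x, mxy, c)
      else if i = 1 then (mxy, y, c)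
      else if i = 2 then (y, myz, c)
      else if i = 3 then (myz, z, c)
      else if i = 4 then (z, mzx, c)
      else (mzx, x, c))"

fun sg_tri :: "nat list \<Rightarrow> sg_vert \<times> sg_vert \<times> sg_vert" where
  "sg_tri [] = (Corner 0, Corner 1, Corner 2)"
| "sg_tri (i # w) = sg_child w i (sg_tri w)"

text \<open>Edges of S_n: each triangle w carries its own three edges (w, j), j < 3.
  Distinct triangles have disjoint edge sets (parallel edges allowed).\<close>
definition sg_edges :: "nat \<Rightarrow> (nat list \<times> nat) set" where
  "sg_edges n = {(w, j). length w = n \<and> set w \<subseteq> {..<6} \<and> j < 3}"

fun sg_ends :: "nat list \<times> nat \<Rightarrow> sg_vert \<times> sg_vert" where
  "sg_ends (w, j) = (case sg_tri w of (x, y, z) \<Rightarrow>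
      if j = 0 then (x, y) else if j = 1 then (y, z) else (z, x))"

definition sg_open_adj :: "nat \<Rightarrow> (nat list \<times> nat \<Rightarrow> bool) \<Rightarrow> (sg_vert \<times> sg_vert) set" where
  "sg_open_adj n \<omega> = {(u, v). \<exists>e \<in> sg_edges n. \<omega> e \<and>
       (sg_ends e = (u, v) \<or> sg_ends e = (v, u))}"

definition perc_measure :: "real \<Rightarrow> nat \<Rightarrow> (nat list \<times> nat \<Rightarrow> bool) pmf" where
  "perc_measure p n = Pi_pmf (sg_edges n) False (\<lambda>_. bernoulli_pmf p)"

definition crossing_prob :: "real \<Rightarrow> nat \<Rightarrow> real" where
  "crossing_prob p n = measure_pmf.prob (perc_measure p n)
      {\<omega>. (Corner 0, Corner 1) \<in> (sg_open_adj n \<omega>)\<^sup>*}"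

definition p_S :: real where
  "p_S = Sup {p \<in> {0..1}. (\<lambda>n. crossing_prob p n) \<longlonglongrightarrow> 0}"

end

theory Submission
  imports Defs
begin

text \<open>Each triangle of the gasket is given one of five connectivity classes, certified by open
  paths inside it: 0 (nothing known), 1, 2, 3 (only the corner pair xy, yz, resp. xz joined) and
  4 (all three corners joined).  The class of a triangle is bounded below by a monotone
  gluing map applied to the classes of its six children, which are independent with the law of
  one level less.  At \<open>p = 1/4\<close> a single triangle has class law \<open>(27, 9, 9, 9, 10)/64\<close>, and one
  gluing step applied to this law yields a law dominating it on every up-set of the class order.
  By monotonicity this domination propagates to all levels and all \<open>p \<ge> 1/4\<close>, so the crossing
  probability stays above \<open>19/64\<close>; hence \<open>p_S \<le> 1/4\<close>.\<close>

section \<open>Connectivity classes and gluing maps\<close>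

definition links_xy :: "nat \<Rightarrow> bool" where "links_xy k \<longleftrightarrow> k = 1 \<or> k = 4"
definition links_yz :: "nat \<Rightarrow> bool" where "links_yz k \<longleftrightarrow> k = 2 \<or> k = 4"
definition links_xz :: "nat \<Rightarrow> bool" where "links_xz k \<longleftrightarrow> k = 3 \<or> k = 4"

definition link_class :: "bool \<Rightarrow> bool \<Rightarrow> bool \<Rightarrow> nat" where
  "link_class a b c =
     (if (a \<and> b) \<or> (a \<and> c) \<or> (b \<and> c) then 4 else if a then 1 else if b then 2
      else if c then 3 else 0)"

lemma link_class_less: "link_class a b c < 5"
  by (simp add: link_class_def)

lemma links_xy_link_class [simp]: "links_xy (link_class a b c) \<longleftrightarrow> a \<or> (b \<and> c)"
  by (auto simp: link_class_def links_xy_def)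

lemma links_yz_link_class [simp]: "links_yz (link_class a b c) \<longleftrightarrow> b \<or> (a \<and> c)"
  by (auto simp: link_class_def links_yz_def)

lemma links_xz_link_class [simp]: "links_xz (link_class a b c) \<longleftrightarrow> c \<or> (a \<and> b)"
  by (auto simp: link_class_def links_xz_def)

text \<open>With \<open>m\<close> the midpoint of \<open>xy\<close> and \<open>c\<close> the centre, classes \<open>k\<close>, \<open>k'\<close> of the triangles
  \<open>(x, m, c)\<close> and \<open>(m, y, c)\<close> give a class of \<open>(x, y, c)\<close>.\<close>

definition glue_pair :: "nat \<Rightarrow> nat \<Rightarrow> nat" where
  "glue_pair k k' =
     (let a = links_xy k; f = links_yz k \<or> links_xz k'; b = links_xz k; d = links_xy k';
          e = links_yz k'
      in link_class ((a \<and> d) \<or> (b \<and> e) \<or> (a \<and> f \<and> e) \<or> (b \<and> f \<and> d))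
           (e \<or> (d \<and> f) \<or> (d \<and> a \<and> b))
           (b \<or> (a \<and> f) \<or> (a \<and> d \<and> e)))"

definition connects4 :: "bool \<Rightarrow> bool \<Rightarrow> bool \<Rightarrow> bool \<Rightarrow> bool \<Rightarrow> bool \<Rightarrow> bool" where
  "connects4 ab ac cb az zb cz \<longleftrightarrow>
     ab \<or> (ac \<and> cb) \<or> (az \<and> zb) \<or> (ac \<and> cz \<and> zb) \<or> (az \<and> cz \<and> cb)"

text \<open>Classes of \<open>(x, y, c)\<close>, \<open>(y, z, c)\<close>, \<open>(z, x, c)\<close> give a class of \<open>(x, y, z)\<close>.\<close>

definition glue_triple :: "nat \<Rightarrow> nat \<Rightarrow> nat \<Rightarrow> nat" where
  "glue_triple q0 q1 q2 =
     (let xy = links_xy q0; yz = links_xy q1; zx = links_xy q2;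
          xc = links_xz q0 \<or> links_yz q2; yc = links_yz q0 \<or> links_xz q1;
          zc = links_yz q1 \<or> links_xz q2
      in link_class (connects4 xy xc yc zx yz zc) (connects4 yz yc zc xy zx xc)
           (connects4 zx xc zc xy yz yc))"

definition glue_six :: "nat list \<Rightarrow> nat" where
  "glue_six l = glue_triple (glue_pair (l!0) (l!1)) (glue_pair (l!2) (l!3)) (glue_pair (l!4) (l!5))"

lemma glue_six_less: "glue_six l < 5"
  by (simp add: glue_six_def glue_triple_def link_class_less Let_def)

fun cert_class :: "nat \<Rightarrow> (nat list \<times> nat \<Rightarrow> bool) \<Rightarrow> nat list \<Rightarrow> nat" where
  "cert_class 0 \<omega> w = link_class (\<omega> (w, 0)) (\<omega> (w, 1)) (\<omega> (w, 2))"
| "cert_class (Suc n) \<omega> w =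
     glue_six (map (\<lambda>i. cert_class n \<omega> (i # w)) [0, 1, 2, 3, 4, 5])"

lemma cert_class_less: "cert_class n \<omega> w < 5"
  by (cases n) (simp_all add: link_class_less glue_six_less)

section \<open>Soundness of the certified classes\<close>

fun certifies :: "('a \<times> 'a) set \<Rightarrow> 'a \<times> 'a \<times> 'a \<Rightarrow> nat \<Rightarrow> bool" where
  "certifies R (x, y, z) k \<longleftrightarrow>
     (links_xy k \<longrightarrow> (x, y) \<in> R) \<and> (links_yz k \<longrightarrow> (y, z) \<in> R) \<and> (links_xz k \<longrightarrow> (x, z) \<in> R)"

locale sym_trans =
  fixes R :: "('a \<times> 'a) set"
  assumes trans: "trans R" and sym: "sym R"
begin

lemma rel_trans: "(x, y) \<in> R \<Longrightarrow> (y, z) \<in> R \<Longrightarrow> (x, z) \<in> R"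
  using trans by (meson transD)

lemma rel_sym: "(x, y) \<in> R \<Longrightarrow> (y, x) \<in> R"
  using sym by (meson symD)

lemma certifies_link_class:
  assumes A: "a \<Longrightarrow> (x, y) \<in> R" and B: "b \<Longrightarrow> (y, z) \<in> R" and C: "c \<Longrightarrow> (x, z) \<in> R"
  shows "certifies R (x, y, z) (link_class a b c)"
proof -
  have "(x, y) \<in> R" if "a \<or> b \<and> c"
    using that A rel_trans[OF C rel_sym[OF B]] by blast
  moreover have "(y, z) \<in> R" if "b \<or> a \<and> c"
    using that B rel_trans[OF rel_sym[OF A] C] by blast
  moreover have "(x, z) \<in> R" if "c \<or> a \<and> b"
    using that C rel_trans[OF A B] by blast
  ultimately show ?thesis by simp
qed

lemma certifies_glue_pair:
  assumes "certifies R (s0, m, c) k" and "certifies R (m, s1, c) k'"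
  shows "certifies R (s0, s1, c) (glue_pair k k')"
proof -
  from assms have A: "links_xy k \<Longrightarrow> (s0, m) \<in> R" and B: "links_xz k \<Longrightarrow> (s0, c) \<in> R"
    and D: "links_xy k' \<Longrightarrow> (m, s1) \<in> R" and E: "links_yz k' \<Longrightarrow> (s1, c) \<in> R"
    and F: "links_yz k \<or> links_xz k' \<Longrightarrow> (m, c) \<in> R"
    by auto
  show ?thesis
    unfolding glue_pair_def Let_def
  proof (rule certifies_link_class)
    show "links_xy k \<and> links_xy k' \<or> links_xz k \<and> links_yz k'
        \<or> links_xy k \<and> (links_yz k \<or> links_xz k') \<and> links_yz k'
        \<or> links_xz k \<and> (links_yz k \<or> links_xz k') \<and> links_xy k' \<Longrightarrow> (s0, s1) \<in> R"
      using rel_trans[OF A D] rel_trans[OF B rel_sym[OF E]]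
        rel_trans[OF rel_trans[OF A F] rel_sym[OF E]] rel_trans[OF rel_trans[OF B rel_sym[OF F]] D]
      by blast
    show "links_yz k' \<or> links_xy k' \<and> (links_yz k \<or> links_xz k')
        \<or> links_xy k' \<and> links_xy k \<and> links_xz k \<Longrightarrow> (s1, c) \<in> R"
      using E rel_trans[OF rel_sym[OF D] F] rel_trans[OF rel_trans[OF rel_sym[OF D] rel_sym[OF A]] B]
      by blast
    show "links_xz k \<or> links_xy k \<and> (links_yz k \<or> links_xz k')
        \<or> links_xy k \<and> links_xy k' \<and> links_yz k' \<Longrightarrow> (s0, c) \<in> R"
      using B rel_trans[OF A F] rel_trans[OF rel_trans[OF A D] E]
      by blast
  qed
qed

lemma connects4_sound:
  assumes "connects4 ab ac cb az zb cz"
    and AB: "ab \<Longrightarrow> (a, b) \<in> R" and AC: "ac \<Longrightarrow> (a, c) \<in> R" and CB: "cb \<Longrightarrow> (c, b) \<in> R"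
    and AZ: "az \<Longrightarrow> (a, z) \<in> R" and ZB: "zb \<Longrightarrow> (z, b) \<in> R" and CZ: "cz \<Longrightarrow> (c, z) \<in> R"
  shows "(a, b) \<in> R"
  using assms(1) unfolding connects4_def
proof (elim disjE conjE)
  show "ac \<Longrightarrow> cb \<Longrightarrow> (a, b) \<in> R" by (rule rel_trans[OF AC CB])
  show "az \<Longrightarrow> zb \<Longrightarrow> (a, b) \<in> R" by (rule rel_trans[OF AZ ZB])
  show "ac \<Longrightarrow> cz \<Longrightarrow> zb \<Longrightarrow> (a, b) \<in> R" by (rule rel_trans[OF rel_trans[OF AC CZ] ZB])
  show "az \<Longrightarrow> cz \<Longrightarrow> cb \<Longrightarrow> (a, b) \<in> R" by (rule rel_trans[OF rel_trans[OF AZ rel_sym[OF CZ]] CB])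
qed (rule AB)

lemma certifies_glue_triple:
  assumes "certifies R (x, y, c) q0" "certifies R (y, z, c) q1" "certifies R (z, x, c) q2"
  shows "certifies R (x, y, z) (glue_triple q0 q1 q2)"
proof -
  from assms have XY: "links_xy q0 \<Longrightarrow> (x, y) \<in> R" and YZ: "links_xy q1 \<Longrightarrow> (y, z) \<in> R"
    and ZX: "links_xy q2 \<Longrightarrow> (z, x) \<in> R" and XC: "links_xz q0 \<or> links_yz q2 \<Longrightarrow> (x, c) \<in> R"
    and YC: "links_yz q0 \<or> links_xz q1 \<Longrightarrow> (y, c) \<in> R"
    and ZC: "links_yz q1 \<or> links_xz q2 \<Longrightarrow> (z, c) \<in> R"
    by auto
  note reversed = rel_sym[OF XY] rel_sym[OF YZ] rel_sym[OF ZX] rel_sym[OF XC] rel_sym[OF YC] rel_sym[OF ZC]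
  show ?thesis unfolding glue_triple_def Let_def
    by (rule certifies_link_class; erule connects4_sound) (rule XY YZ ZX XC YC ZC reversed; assumption)+
qed

end

lemma sym_trans_rtrancl_open_adj: "sym_trans ((sg_open_adj n \<omega>)\<^sup>*)"
proof
  show "trans ((sg_open_adj n \<omega>)\<^sup>*)" by (rule trans_rtrancl)
  have "sym (sg_open_adj n \<omega>)" unfolding sg_open_adj_def sym_def by blast
  then show "sym ((sg_open_adj n \<omega>)\<^sup>*)" by (rule sym_rtrancl)
qed

lemma open_edge_in_rtrancl:
  assumes "set w \<subseteq> {..<6}" "j < 3" "\<omega> (w, j)" "sg_ends (w, j) = (u, v)"
  shows "(u, v) \<in> (sg_open_adj (length w) \<omega>)\<^sup>*"
  using assms unfolding sg_open_adj_def sg_edges_def by (intro r_into_rtrancl) auto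

lemma cert_class_sound:
  assumes "set w \<subseteq> {..<6}"
  shows "certifies ((sg_open_adj (n + length w) \<omega>)\<^sup>*) (sg_tri w) (cert_class n \<omega> w)"
  using assms
proof (induction n arbitrary: w)
  case 0
  obtain x y z where t: "sg_tri w = (x, y, z)" by (metis prod_cases3)
  interpret sym_trans "(sg_open_adj (length w) \<omega>)\<^sup>*" by (rule sym_trans_rtrancl_open_adj)
  have "\<omega> (w, j) \<Longrightarrow> sg_ends (w, j) \<in> (sg_open_adj (length w) \<omega>)\<^sup>*" if "j < 3" for j
    using open_edge_in_rtrancl[OF 0 that] by (metis prod.collapse)
  from this[of 0] this[of 1] this[of 2] t have "certifies ((sg_open_adj (length w) \<omega>)\<^sup>*) (x, y, z) (cert_class 0 \<omega> w)"
    unfolding cert_class.simps by (intro certifies_link_class) (auto intro: rel_sym)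
  then show ?case using t by simp
next
  case (Suc n)
  obtain x y z where t: "sg_tri w = (x, y, z)" by (metis prod_cases3)
  let ?R = "(sg_open_adj (Suc n + length w) \<omega>)\<^sup>*"
  interpret sym_trans ?R by (rule sym_trans_rtrancl_open_adj)
  have child: "certifies ?R (sg_child w i (x, y, z)) (cert_class n \<omega> (i # w))" if "i < 6" for i
    using Suc.IH[of "i # w"] Suc.prems that t by simp
  have "certifies ?R (x, y, New w 3) (glue_pair (cert_class n \<omega> (0 # w)) (cert_class n \<omega> (1 # w)))"
    by (rule certifies_glue_pair[where m = "New w 0"]) (use child[of 0] child[of 1] in simp_all)
  moreover
  have "certifies ?R (y, z, New w 3) (glue_pair (cert_class n \<omega> (2 # w)) (cert_class n \<omega> (3 # w)))"
    by (rule certifies_glue_pair[where m = "New w 1"]) (use child[of 2] child[of 3] in simp_all)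
  moreover
  have "certifies ?R (z, x, New w 3) (glue_pair (cert_class n \<omega> (4 # w)) (cert_class n \<omega> (5 # w)))"
    by (rule certifies_glue_pair[where m = "New w 2"]) (use child[of 4] child[of 5] in simp_all)
  ultimately have "certifies ?R (x, y, z) (glue_triple
      (glue_pair (cert_class n \<omega> (0 # w)) (cert_class n \<omega> (1 # w)))
      (glue_pair (cert_class n \<omega> (2 # w)) (cert_class n \<omega> (3 # w)))
      (glue_pair (cert_class n \<omega> (4 # w)) (cert_class n \<omega> (5 # w))))"
    by (rule certifies_glue_triple)
  then show ?case using t by (simp add: glue_six_def)
qed

section \<open>Monotonicity and stochastic domination of class laws\<close>

definition class_le :: "nat \<Rightarrow> nat \<Rightarrow> bool" where
  "class_le k k' \<longleftrightarrow>
     (links_xy k \<longrightarrow> links_xy k') \<and> (links_yz k \<longrightarrow> links_yz k') \<and> (links_xz k \<longrightarrow> links_xz k')"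

lemma class_le_refl [simp]: "class_le k k"
  by (simp add: class_le_def)

lemma class_le_link_class:
  "(a \<longrightarrow> a') \<Longrightarrow> (b \<longrightarrow> b') \<Longrightarrow> (c \<longrightarrow> c') \<Longrightarrow> class_le (link_class a b c) (link_class a' b' c')"
  by (auto simp: class_le_def)

lemma glue_pair_mono: "class_le k l \<Longrightarrow> class_le k' l' \<Longrightarrow> class_le (glue_pair k k') (glue_pair l l')"
  unfolding glue_pair_def Let_def by (rule class_le_link_class) (auto simp: class_le_def)

lemma glue_triple_mono:
  "class_le q0 r0 \<Longrightarrow> class_le q1 r1 \<Longrightarrow> class_le q2 r2 \<Longrightarrow>
   class_le (glue_triple q0 q1 q2) (glue_triple r0 r1 r2)"
  unfolding glue_triple_def Let_def by (rule class_le_link_class) (auto simp: class_le_def connects4_def)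

lemma glue_six_mono:
  assumes "list_all2 class_le l l'" "length l = 6"
  shows "class_le (glue_six l) (glue_six l')"
proof -
  have "class_le (l!i) (l'!i)" if "i < 6" for i
    using assms that list_all2_nthD by fastforce
  then show ?thesis unfolding glue_six_def by (intro glue_triple_mono glue_pair_mono) auto
qed

definition class_upsets :: "nat set list" where
  "class_upsets = [{4}, {1,4}, {2,4}, {3,4}, {1,2,4}, {1,3,4}, {2,3,4}, {1,2,3,4}, {0,1,2,3,4}]"

lemma class_upsets_up_closed:
  assumes "U \<in> set class_upsets" "k < 5" "k' < 5" "class_le k k'" "k \<in> U"
  shows "k' \<in> U"
proof -
  have "k \<in> {0,1,2,3,4}" "k' \<in> {0,1,2,3,4}" using assms by auto
  then show ?thesis
    using assms by (auto simp: class_upsets_def class_le_def links_xy_def links_yz_def links_xz_def)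
qed

definition upset_le :: "(nat \<Rightarrow> real) \<Rightarrow> (nat \<Rightarrow> real) \<Rightarrow> bool" where
  "upset_le \<mu> \<nu> \<longleftrightarrow> (\<forall>U \<in> set class_upsets. sum \<mu> U \<le> sum \<nu> U)"

lemma abel_summation_le:
  fixes m0 m1 m2 m3 m4 n0 n1 n2 n3 n4 f0 f1 f2 f3 f4 :: real
  assumes "0 \<le> f0" "f0 \<le> f1" "f1 \<le> f2" "f2 \<le> f3" "f3 \<le> f4"
    and "m0 + m1 + m2 + m3 + m4 \<le> n0 + n1 + n2 + n3 + n4" "m1 + m2 + m3 + m4 \<le> n1 + n2 + n3 + n4"
    and "m2 + m3 + m4 \<le> n2 + n3 + n4" "m3 + m4 \<le> n3 + n4" "m4 \<le> n4"
  shows "m0 * f0 + m1 * f1 + m2 * f2 + m3 * f3 + m4 * f4 \<le> n0 * f0 + n1 * f1 + n2 * f2 + n3 * f3 + n4 * f4"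
proof -
  have "(n0 * f0 + n1 * f1 + n2 * f2 + n3 * f3 + n4 * f4) - (m0 * f0 + m1 * f1 + m2 * f2 + m3 * f3 + m4 * f4)
    = f0 * ((n0 + n1 + n2 + n3 + n4) - (m0 + m1 + m2 + m3 + m4))
      + (f1 - f0) * ((n1 + n2 + n3 + n4) - (m1 + m2 + m3 + m4))
      + (f2 - f1) * ((n2 + n3 + n4) - (m2 + m3 + m4)) + (f3 - f2) * ((n3 + n4) - (m3 + m4))
      + (f4 - f3) * (n4 - m4)"
    by (simp add: algebra_simps)
  moreover have "0 \<le> f0 * ((n0 + n1 + n2 + n3 + n4) - (m0 + m1 + m2 + m3 + m4))"
    and "0 \<le> (f1 - f0) * ((n1 + n2 + n3 + n4) - (m1 + m2 + m3 + m4))"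
    and "0 \<le> (f2 - f1) * ((n2 + n3 + n4) - (m2 + m3 + m4))"
    and "0 \<le> (f3 - f2) * ((n3 + n4) - (m3 + m4))" and "0 \<le> (f4 - f3) * (n4 - m4)"
    using assms by simp_all
  ultimately show ?thesis by linarith
qed

lemma sum_lessThan_5: "(\<Sum>k<5. f k) = f 0 + f 1 + f 2 + f 3 + f 4" for f :: "nat \<Rightarrow> real"
  by (simp add: numeral_eq_Suc)

lemma upset_le_sum_le:
  assumes "upset_le \<mu> \<nu>" and mono: "\<And>k k'. k < 5 \<Longrightarrow> k' < 5 \<Longrightarrow> class_le k k' \<Longrightarrow> f k \<le> f k'"
    and "0 \<le> f 0"
  shows "(\<Sum>k<5. \<mu> k * f k) \<le> (\<Sum>k<5. \<nu> k * f k)"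
proof -
  have D: "\<mu> 4 \<le> \<nu> 4" "\<mu> 1 + \<mu> 4 \<le> \<nu> 1 + \<nu> 4" "\<mu> 2 + \<mu> 4 \<le> \<nu> 2 + \<nu> 4" "\<mu> 3 + \<mu> 4 \<le> \<nu> 3 + \<nu> 4"
    "\<mu> 1 + \<mu> 2 + \<mu> 4 \<le> \<nu> 1 + \<nu> 2 + \<nu> 4" "\<mu> 1 + \<mu> 3 + \<mu> 4 \<le> \<nu> 1 + \<nu> 3 + \<nu> 4"
    "\<mu> 2 + \<mu> 3 + \<mu> 4 \<le> \<nu> 2 + \<nu> 3 + \<nu> 4" "\<mu> 1 + \<mu> 2 + \<mu> 3 + \<mu> 4 \<le> \<nu> 1 + \<nu> 2 + \<nu> 3 + \<nu> 4"
    "\<mu> 0 + \<mu> 1 + \<mu> 2 + \<mu> 3 + \<mu> 4 \<le> \<nu> 0 + \<nu> 1 + \<nu> 2 + \<nu> 3 + \<nu> 4"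
    using assms(1) unfolding upset_le_def class_upsets_def by (simp_all add: algebra_simps)
  have M: "f 0 \<le> f 1" "f 0 \<le> f 2" "f 0 \<le> f 3" "f 1 \<le> f 4" "f 2 \<le> f 4" "f 3 \<le> f 4"
    by (rule mono; simp add: class_le_def links_xy_def links_yz_def links_xz_def)+
  text \<open>Apply Abel summation along each linear extension of the class order.\<close>
  consider "f 1 \<le> f 2" "f 2 \<le> f 3" | "f 1 \<le> f 3" "f 3 \<le> f 2" | "f 2 \<le> f 1" "f 1 \<le> f 3"
    | "f 2 \<le> f 3" "f 3 \<le> f 1" | "f 3 \<le> f 1" "f 1 \<le> f 2" | "f 3 \<le> f 2" "f 2 \<le> f 1"
    by linarith
  then have "\<mu> 0 * f 0 + \<mu> 1 * f 1 + \<mu> 2 * f 2 + \<mu> 3 * f 3 + \<mu> 4 * f 4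
      \<le> \<nu> 0 * f 0 + \<nu> 1 * f 1 + \<nu> 2 * f 2 + \<nu> 3 * f 3 + \<nu> 4 * f 4"
  proof cases
    case 1 then show ?thesis
      using abel_summation_le[of "f 0" "f 1" "f 2" "f 3" "f 4" "\<mu> 0" "\<mu> 1" "\<mu> 2" "\<mu> 3" "\<mu> 4"
          "\<nu> 0" "\<nu> 1" "\<nu> 2" "\<nu> 3" "\<nu> 4"] assms(3) M D by (simp add: algebra_simps)
  next
    case 2 then show ?thesis
      using abel_summation_le[of "f 0" "f 1" "f 3" "f 2" "f 4" "\<mu> 0" "\<mu> 1" "\<mu> 3" "\<mu> 2" "\<mu> 4"
          "\<nu> 0" "\<nu> 1" "\<nu> 3" "\<nu> 2" "\<nu> 4"] assms(3) M D by (simp add: algebra_simps)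
  next
    case 3 then show ?thesis
      using abel_summation_le[of "f 0" "f 2" "f 1" "f 3" "f 4" "\<mu> 0" "\<mu> 2" "\<mu> 1" "\<mu> 3" "\<mu> 4"
          "\<nu> 0" "\<nu> 2" "\<nu> 1" "\<nu> 3" "\<nu> 4"] assms(3) M D by (simp add: algebra_simps)
  next
    case 4 then show ?thesis
      using abel_summation_le[of "f 0" "f 2" "f 3" "f 1" "f 4" "\<mu> 0" "\<mu> 2" "\<mu> 3" "\<mu> 1" "\<mu> 4"
          "\<nu> 0" "\<nu> 2" "\<nu> 3" "\<nu> 1" "\<nu> 4"] assms(3) M D by (simp add: algebra_simps)
  next
    case 5 then show ?thesis
      using abel_summation_le[of "f 0" "f 3" "f 1" "f 2" "f 4" "\<mu> 0" "\<mu> 3" "\<mu> 1" "\<mu> 2" "\<mu> 4"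
          "\<nu> 0" "\<nu> 3" "\<nu> 1" "\<nu> 2" "\<nu> 4"] assms(3) M D by (simp add: algebra_simps)
  next
    case 6 then show ?thesis
      using abel_summation_le[of "f 0" "f 3" "f 2" "f 1" "f 4" "\<mu> 0" "\<mu> 3" "\<mu> 2" "\<mu> 1" "\<mu> 4"
          "\<nu> 0" "\<nu> 3" "\<nu> 2" "\<nu> 1" "\<nu> 4"] assms(3) M D by (simp add: algebra_simps)
  qed
  then show ?thesis by (simp add: sum_lessThan_5)
qed

text \<open>\<open>prod_weight_sum S \<mu>s h\<close> is the sum of \<open>(\<Prod>i<n. \<mu>s!i (l!i)) * h l\<close> over all \<open>l \<in> S\<^sup>n\<close>,
  \<open>n = length \<mu>s\<close>: the expectation of \<open>h\<close> under independent coordinates.\<close>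

fun prod_weight_sum :: "'a set \<Rightarrow> ('a \<Rightarrow> real) list \<Rightarrow> ('a list \<Rightarrow> real) \<Rightarrow> real" where
  "prod_weight_sum S [] h = h []"
| "prod_weight_sum S (\<mu> # \<mu>s) h = (\<Sum>k\<in>S. \<mu> k * prod_weight_sum S \<mu>s (\<lambda>l. h (k # l)))"

definition nonneg_weights :: "'a set \<Rightarrow> ('a \<Rightarrow> real) list \<Rightarrow> bool" where
  "nonneg_weights S \<mu>s \<longleftrightarrow> (\<forall>\<mu> \<in> set \<mu>s. \<forall>k \<in> S. 0 \<le> \<mu> k)"

lemma prod_weight_sum_mono:
  assumes "\<And>l. length l = length \<mu>s \<Longrightarrow> h l \<le> h' l" "nonneg_weights S \<mu>s"
  shows "prod_weight_sum S \<mu>s h \<le> prod_weight_sum S \<mu>s h'"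
  using assms
proof (induction \<mu>s arbitrary: h h')
  case (Cons \<mu> \<mu>s)
  have "prod_weight_sum S \<mu>s (\<lambda>l. h (k # l)) \<le> prod_weight_sum S \<mu>s (\<lambda>l. h' (k # l))" for k
    using Cons.prems by (intro Cons.IH) (auto simp: nonneg_weights_def)
  then show ?case
    using Cons.prems by (auto simp: nonneg_weights_def intro!: sum_mono mult_left_mono)
qed simp

lemma prod_weight_sum_nonneg:
  assumes "\<And>l. 0 \<le> h l" "nonneg_weights S \<mu>s"
  shows "0 \<le> prod_weight_sum S \<mu>s h"
  using assms
proof (induction \<mu>s arbitrary: h)
  case (Cons \<mu> \<mu>s)
  then have "nonneg_weights S \<mu>s" by (simp add: nonneg_weights_def)
  then show ?case
    using Cons by (auto simp: nonneg_weights_def intro!: sum_nonneg mult_nonneg_nonneg)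
qed simp

lemma prod_weight_sum_upset_le:
  assumes "list_all2 upset_le \<mu>s \<nu>s" "nonneg_weights {..<5} \<mu>s" "nonneg_weights {..<5} \<nu>s"
    and "\<And>l. 0 \<le> h l"
    and "\<And>l l'. list_all2 class_le l l' \<Longrightarrow> length l = length \<mu>s \<Longrightarrow> h l \<le> h l'"
  shows "prod_weight_sum {..<5} \<mu>s h \<le> prod_weight_sum {..<5} \<nu>s h"
  using assms
proof (induction \<mu>s arbitrary: \<nu>s h)
  case (Cons \<mu> \<mu>s)
  then obtain \<nu> \<nu>s' where \<nu>s: "\<nu>s = \<nu> # \<nu>s'" "upset_le \<mu> \<nu>" "list_all2 upset_le \<mu>s \<nu>s'"
    by (cases \<nu>s) auto
  have nonneg: "nonneg_weights {..<5} \<mu>s" "nonneg_weights {..<5} \<nu>s'" "\<forall>k<5. 0 \<le> \<mu> k"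
    using Cons.prems \<nu>s by (auto simp: nonneg_weights_def)
  have len: "length \<nu>s' = length \<mu>s" using \<nu>s(3) list_all2_lengthD by metis
  have "prod_weight_sum {..<5} (\<mu> # \<mu>s) h
      \<le> (\<Sum>k<5. \<mu> k * prod_weight_sum {..<5} \<nu>s' (\<lambda>l. h (k # l)))"
    using nonneg \<nu>s Cons.prems
    by (auto intro!: sum_mono mult_left_mono Cons.IH)
  also have "\<dots> \<le> (\<Sum>k<5. \<nu> k * prod_weight_sum {..<5} \<nu>s' (\<lambda>l. h (k # l)))"
  proof (rule upset_le_sum_le[OF \<nu>s(2)])
    show "0 \<le> prod_weight_sum {..<5} \<nu>s' (\<lambda>l. h (0 # l))"
      using nonneg Cons.prems by (intro prod_weight_sum_nonneg) auto
    fix k k' :: nat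
    assume "class_le k k'"
    then have "h (k # l) \<le> h (k' # l)" if "length l = length \<nu>s'" for l
      using Cons.prems(5) len that by (simp add: list_all2_refl)
    then show "prod_weight_sum {..<5} \<nu>s' (\<lambda>l. h (k # l)) \<le> prod_weight_sum {..<5} \<nu>s' (\<lambda>l. h (k' # l))"
      using nonneg by (intro prod_weight_sum_mono) auto
  qed
  finally show ?case using \<nu>s by simp
qed simp

section \<open>The class law at \<open>p = 1/4\<close> and one renormalisation step\<close>

text \<open>\<open>law_quarter\<close> is the class law of a single triangle at \<open>p = 1/4\<close>; \<open>law_pair\<close> and
  \<open>law_step\<close> are the laws of \<open>glue_pair\<close> and \<open>glue_six\<close> applied to independent classes with
  law \<open>law_quarter\<close>.\<close>

definition law_quarter :: "nat \<Rightarrow> real" where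
  "law_quarter k = (if k = 0 then 27/64 else if k = 4 then 10/64 else if k < 4 then 9/64 else 0)"

definition law_pair :: "nat \<Rightarrow> real" where
  "law_pair k = (if k = 0 then 1782/4096 else if k = 1 then 81/4096 else if k = 4 then 541/4096
                 else if k < 4 then 846/4096 else 0)"

definition law_step :: "nat \<Rightarrow> real" where
  "law_step k = (if k = 0 then 25603961328/68719476736 else if k = 4 then 14209976260/68719476736
                 else if k < 4 then 9635179716/68719476736 else 0)"

lemma sum_law_quarter_glue_pair:
  "(\<Sum>a<5. law_quarter a * (\<Sum>b<5. law_quarter b * f (glue_pair a b))) = (\<Sum>q<5. law_pair q * f q)"
  by (simp add: sum_lessThan_5 law_quarter_def law_pair_def glue_pair_def Let_def link_class_def
      links_xy_def links_yz_def links_xz_def)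
    (simp add: field_simps)

lemma sum_law_pair_glue_triple:
  "(\<Sum>a<5. law_pair a * (\<Sum>b<5. law_pair b * (\<Sum>c<5. law_pair c * f (glue_triple a b c))))
    = (\<Sum>q<5. law_step q * f q)"
  by (simp add: sum_lessThan_5 law_pair_def law_step_def glue_triple_def connects4_def Let_def
      link_class_def links_xy_def links_yz_def links_xz_def)
    (simp add: field_simps)

lemma replicate_6: "replicate 6 x = [x, x, x, x, x, x]"
  by (simp add: numeral_eq_Suc)

lemma prod_weight_sum_law_quarter_glue_six:
  "prod_weight_sum {..<5} (replicate 6 law_quarter) (\<lambda>l. f (glue_six l)) = (\<Sum>q<5. law_step q * f q)"
proof -
  have "prod_weight_sum {..<5} (replicate 6 law_quarter) (\<lambda>l. f (glue_six l)) =
    (\<Sum>a0<5. law_quarter a0 * (\<Sum>a1<5. law_quarter a1 * (\<Sum>a2<5. law_quarter a2 *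
      (\<Sum>a3<5. law_quarter a3 * (\<Sum>a4<5. law_quarter a4 * (\<Sum>a5<5. law_quarter a5 *
        f (glue_triple (glue_pair a0 a1) (glue_pair a2 a3) (glue_pair a4 a5))))))))"
    by (simp add: replicate_6 glue_six_def)
  also have "\<dots> = (\<Sum>q<5. law_step q * f q)"
  proof -
    have third: "(\<Sum>a<5. law_quarter a * (\<Sum>b<5. law_quarter b * f (glue_triple X Y (glue_pair a b))))
        = (\<Sum>q<5. law_pair q * f (glue_triple X Y q))" for X Y
      by (rule sum_law_quarter_glue_pair)
    have second: "(\<Sum>a<5. law_quarter a * (\<Sum>b<5. law_quarter b *
          (\<Sum>q<5. law_pair q * f (glue_triple X (glue_pair a b) q))))
        = (\<Sum>r<5. law_pair r * (\<Sum>q<5. law_pair q * f (glue_triple X r q)))" for X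
      by (rule sum_law_quarter_glue_pair)
    have first: "(\<Sum>a<5. law_quarter a * (\<Sum>b<5. law_quarter b * (\<Sum>r<5. law_pair r *
          (\<Sum>q<5. law_pair q * f (glue_triple (glue_pair a b) r q)))))
        = (\<Sum>a<5. law_pair a * (\<Sum>r<5. law_pair r * (\<Sum>q<5. law_pair q * f (glue_triple a r q))))"
      by (rule sum_law_quarter_glue_pair)
    show ?thesis by (simp only: third second first sum_law_pair_glue_triple)
  qed
  finally show ?thesis .
qed

lemma upset_le_law_quarter_law_step: "upset_le law_quarter law_step"
  by (auto simp: upset_le_def class_upsets_def law_quarter_def law_step_def)


section \<open>Lists of independent random variables\<close>

lemma measure_pmf_prob_eq_sum:
  assumes "finite A" "set_pmf M \<subseteq> A"
  shows "measure_pmf.prob M X = (\<Sum>a\<in>A. pmf M a * indicator X a)"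
proof -
  have "measure_pmf.prob M X = measure_pmf.prob M (X \<inter> set_pmf M)"
    by (simp add: measure_Int_set_pmf)
  also have "\<dots> = sum (pmf M) (X \<inter> set_pmf M)"
    using assms by (intro measure_measure_pmf_finite) (auto intro: finite_subset)
  also have "\<dots> = sum (pmf M) (A \<inter> X)"
    using assms by (intro sum.mono_neutral_left) (auto simp: set_pmf_eq)
  also have "\<dots> = (\<Sum>a\<in>A. pmf M a * indicator X a)"
    using assms by (simp add: sum.inter_restrict indicator_def)
  finally show ?thesis .
qed

lemma measure_pair_pmf_eq_sum:
  assumes "finite A" "set_pmf M \<subseteq> A" "finite B" "set_pmf N \<subseteq> B"
  shows "measure_pmf.prob (pair_pmf M N) Y = (\<Sum>a\<in>A. pmf M a * measure_pmf.prob N {t. (a, t) \<in> Y})"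
proof -
  have "measure_pmf.prob (pair_pmf M N) Y = (\<Sum>x\<in>A \<times> B. pmf (pair_pmf M N) x * indicator Y x)"
    using assms by (intro measure_pmf_prob_eq_sum) auto
  also have "\<dots> = (\<Sum>(a, b)\<in>A \<times> B. pmf M a * (pmf N b * indicator Y (a, b)))"
    by (rule sum.cong) (auto simp: pmf_pair)
  also have "\<dots> = (\<Sum>a\<in>A. pmf M a * (\<Sum>b\<in>B. pmf N b * indicator {t. (a, t) \<in> Y} b))"
    by (simp add: sum.cartesian_product sum_distrib_left indicator_def)
  also have "\<dots> = (\<Sum>a\<in>A. pmf M a * measure_pmf.prob N {t. (a, t) \<in> Y})"
    using assms by (simp add: measure_pmf_prob_eq_sum[of B N])
  finally show ?thesis .
qed

fun list_pmf :: "'a pmf list \<Rightarrow> 'a list pmf" where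
  "list_pmf [] = return_pmf []"
| "list_pmf (M # Ms) = map_pmf (\<lambda>(a, t). a # t) (pair_pmf M (list_pmf Ms))"

lemma set_list_pmf_subset:
  "\<forall>M \<in> set Ms. set_pmf M \<subseteq> S \<Longrightarrow> set_pmf (list_pmf Ms) \<subseteq> {l. set l \<subseteq> S \<and> length l = length Ms}"
  by (induction Ms) fastforce+

lemma measure_list_pmf:
  assumes "finite S" "\<forall>M \<in> set Ms. set_pmf M \<subseteq> S"
  shows "measure_pmf.prob (list_pmf Ms) X = prod_weight_sum S (map pmf Ms) (indicator X)"
  using assms(2)
proof (induction Ms arbitrary: X)
  case (Cons M Ms)
  have "finite {l. set l \<subseteq> S \<and> length l = length Ms}"
    using assms(1) by (rule finite_lists_length_eq)
  then have "measure_pmf.prob (list_pmf (M # Ms)) X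
      = (\<Sum>a\<in>S. pmf M a * measure_pmf.prob (list_pmf Ms) {t. a # t \<in> X})"
    using Cons.prems assms(1) set_list_pmf_subset[of Ms S]
    by (simp add: measure_pair_pmf_eq_sum[where B = "{l. set l \<subseteq> S \<and> length l = length Ms}"])
  also have "\<dots> = (\<Sum>a\<in>S. pmf M a * prod_weight_sum S (map pmf Ms) (indicator {t. a # t \<in> X}))"
    using Cons by simp
  also have "\<dots> = prod_weight_sum S (map pmf (M # Ms)) (indicator X)"
  proof -
    have "indicator {t. a # t \<in> X} = (\<lambda>l. indicator X (a # l) :: real)" for a
      by (auto simp: indicator_def)
    then show ?thesis by simp
  qed
  finally show ?case .
qed simp

lemma map_list_pmf: "map_pmf (map f) (list_pmf Ms) = list_pmf (map (map_pmf f) Ms)"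
proof (induction Ms)
  case (Cons M Ms)
  have "map_pmf (map f) (list_pmf (M # Ms))
      = map_pmf (\<lambda>(a, t). a # t) (map_pmf (\<lambda>(a, t). (f a, map f t)) (pair_pmf M (list_pmf Ms)))"
    by (simp add: pmf.map_comp o_def case_prod_unfold)
  also have "\<dots> = list_pmf (map (map_pmf f) (M # Ms))"
    by (simp add: map_pair Cons)
  finally show ?case .
qed simp

lemma Pi_pmf_eq_list_pmf:
  assumes "distinct es"
  shows "map_pmf (\<lambda>\<omega>. map \<omega> es) (Pi_pmf (set es) dflt (\<lambda>_. M)) = list_pmf (map (\<lambda>_. M) es)"
  using assms
proof (induction es)
  case (Cons e es)
  have "map_pmf (\<lambda>\<omega>. map \<omega> (e # es)) (Pi_pmf (set (e # es)) dflt (\<lambda>_. M))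
      = map_pmf (\<lambda>\<omega>. map \<omega> (e # es))
          (map_pmf (\<lambda>(y, f). f(e := y)) (pair_pmf M (Pi_pmf (set es) dflt (\<lambda>_. M))))"
    using Cons.prems by (simp add: Pi_pmf_insert)
  also have "\<dots> = map_pmf (\<lambda>(a, t). a # t)
      (map_pmf (\<lambda>(y, f). (y, map f es)) (pair_pmf M (Pi_pmf (set es) dflt (\<lambda>_. M))))"
    unfolding pmf.map_comp
    by (rule map_pmf_cong) (use Cons.prems in \<open>auto intro!: map_cong\<close>)
  also have "\<dots> = map_pmf (\<lambda>(a, t). a # t)
      (pair_pmf (map_pmf (\<lambda>y. y) M) (map_pmf (\<lambda>f. map f es) (Pi_pmf (set es) dflt (\<lambda>_. M))))"
    by (simp only: map_pair)
  also have "\<dots> = list_pmf (map (\<lambda>_. M) (e # es))"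
    using Cons by simp
  finally show ?case .
qed simp

section \<open>Renormalisation of the class law\<close>

definition bond_pmf :: "real \<Rightarrow> (nat list \<times> nat) set \<Rightarrow> (nat list \<times> nat \<Rightarrow> bool) pmf" where
  "bond_pmf p A = Pi_pmf A False (\<lambda>_. bernoulli_pmf p)"

definition class_law :: "real \<Rightarrow> nat \<Rightarrow> nat pmf" where
  "class_law p n = map_pmf (\<lambda>\<omega>. cert_class n \<omega> []) (perc_measure p n)"

text \<open>Addresses list the most recent subdivision first, so the edges of child \<open>i\<close> of the root
  are those whose address ends in \<open>i\<close>.\<close>

definition child_edge :: "nat \<Rightarrow> nat list \<times> nat \<Rightarrow> nat list \<times> nat" where
  "child_edge i = (\<lambda>(u, j). (u @ [i], j))"

definition child_edges :: "nat \<Rightarrow> nat \<Rightarrow> (nat list \<times> nat) set" where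
  "child_edges n i = child_edge i ` sg_edges n"

lemma finite_sg_edges: "finite (sg_edges n)"
proof (rule finite_subset)
  show "sg_edges n \<subseteq> {w. set w \<subseteq> {..<6} \<and> length w = n} \<times> {..<3}"
    by (auto simp: sg_edges_def)
  show "finite ({w. set w \<subseteq> {..<6::nat} \<and> length w = n} \<times> {..<3::nat})"
    by (intro finite_cartesian_product finite_lists_length_eq) auto
qed

lemma finite_child_edges: "finite (child_edges n i)"
  by (simp add: child_edges_def finite_sg_edges)

lemma inj_child_edge: "inj (child_edge i)"
  by (auto simp: inj_def child_edge_def)

lemma append_in_child_edges: "(u @ [k], j) \<in> child_edges n i \<longleftrightarrow> k = i \<and> (u, j) \<in> sg_edges n"
  by (auto simp: child_edges_def child_edge_def)

lemma sg_edges_Suc: "sg_edges (Suc n) = (\<Union>i \<in> set [0, 1, 2, 3, 4, 5]. child_edges n i)"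
proof (intro equalityI subsetI)
  fix x assume "x \<in> sg_edges (Suc n)"
  then obtain v j where x: "x = (v, j)" "length v = Suc n" "set v \<subseteq> {..<6}" "j < 3"
    by (auto simp: sg_edges_def)
  then obtain u i where "v = u @ [i]"
    by (metis append_butlast_last_id list.size(3) nat.simps(3))
  with x have "x \<in> child_edges n i" "i \<in> set [0, 1, 2, 3, 4, 5]"
    by (auto simp: append_in_child_edges sg_edges_def)
  then show "x \<in> (\<Union>i \<in> set [0, 1, 2, 3, 4, 5]. child_edges n i)" by blast
qed (auto simp: child_edges_def child_edge_def sg_edges_def)

lemma map_bond_pmf_child_edges:
  "map_pmf (\<lambda>\<omega>. \<omega> \<circ> child_edge i) (bond_pmf p (child_edges n i)) = bond_pmf p (sg_edges n)"
  unfolding bond_pmf_def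
proof (rule Pi_pmf_bij_betw[symmetric])
  show "finite (sg_edges n)" by (rule finite_sg_edges)
  show "bij_betw (child_edge i) (sg_edges n) (child_edges n i)"
    unfolding child_edges_def using inj_child_edge by (auto simp: bij_betw_def intro: inj_on_subset)
  show "x \<notin> sg_edges n \<Longrightarrow> child_edge i x \<notin> child_edges n i" for x
    unfolding child_edges_def by (simp add: inj_image_mem_iff[OF inj_child_edge])
qed

lemma bond_pmf_children:
  assumes "distinct is"
  shows "map_pmf (\<lambda>\<omega>. map (\<lambda>i. \<omega> \<circ> child_edge i) is) (bond_pmf p (\<Union>i \<in> set is. child_edges n i))
       = list_pmf (map (\<lambda>_. bond_pmf p (sg_edges n)) is)"
  using assms
proof (induction "is")
  case (Cons i "is")
  let ?E = "child_edges n i" and ?F = "\<Union>k \<in> set is. child_edges n k"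
  have disj: "?E \<inter> ?F = {}"
    using Cons.prems by (auto simp: child_edges_def child_edge_def)
  have split: "bond_pmf p (?E \<union> ?F)
      = map_pmf (\<lambda>(f, g) x. if x \<in> ?E then f x else g x) (pair_pmf (bond_pmf p ?E) (bond_pmf p ?F))"
    unfolding bond_pmf_def by (simp add: Pi_pmf_union[OF finite_child_edges _ disj] finite_child_edges)
  have agree: "map (\<lambda>k. (\<lambda>x. if x \<in> ?E then f x else g x) \<circ> child_edge k) (i # is)
      = (f \<circ> child_edge i) # map (\<lambda>k. g \<circ> child_edge k) is"
    if fg: "(f, g) \<in> set_pmf (pair_pmf (bond_pmf p ?E) (bond_pmf p ?F))" for f g
  proof -
    have "f y = False" if "y \<notin> ?E" for y
      using fg that set_Pi_pmf_subset[OF finite_child_edges, of n i False "\<lambda>_. bernoulli_pmf p"]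
      unfolding bond_pmf_def by (auto simp del: split_paired_All)
    moreover have "g y = False" if "y \<notin> ?F" for y
      using fg that set_Pi_pmf_subset[of ?F False "\<lambda>_. bernoulli_pmf p"] finite_child_edges
      unfolding bond_pmf_def by (auto simp del: split_paired_All)
    ultimately show ?thesis
      using Cons.prems by (auto simp: fun_eq_iff child_edge_def append_in_child_edges)
  qed
  have "map_pmf (\<lambda>\<omega>. map (\<lambda>k. \<omega> \<circ> child_edge k) (i # is)) (bond_pmf p (?E \<union> ?F))
      = map_pmf (\<lambda>(f, g). (f \<circ> child_edge i) # map (\<lambda>k. g \<circ> child_edge k) is)
          (pair_pmf (bond_pmf p ?E) (bond_pmf p ?F))"
    unfolding split pmf.map_comp by (rule map_pmf_cong) (auto simp only: agree o_apply split: prod.split)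
  also have "\<dots> = map_pmf (\<lambda>(a, t). a # t) (map_pmf (\<lambda>(f, g). (f \<circ> child_edge i,
      map (\<lambda>k. g \<circ> child_edge k) is)) (pair_pmf (bond_pmf p ?E) (bond_pmf p ?F)))"
    by (simp add: pmf.map_comp o_def case_prod_unfold)
  also have "\<dots> = map_pmf (\<lambda>(a, t). a # t) (pair_pmf (map_pmf (\<lambda>f. f \<circ> child_edge i) (bond_pmf p ?E))
      (map_pmf (\<lambda>g. map (\<lambda>k. g \<circ> child_edge k) is) (bond_pmf p ?F)))"
    by (simp add: map_pair)
  also have "\<dots> = list_pmf (map (\<lambda>_. bond_pmf p (sg_edges n)) (i # is))"
    using Cons by (simp add: map_bond_pmf_child_edges[unfolded comp_def] comp_def)
  finally show ?case by (simp only: list.set UN_insert list.map)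
qed (simp add: bond_pmf_def)

lemma cert_class_append: "cert_class n \<omega> (w @ [i]) = cert_class n (\<omega> \<circ> child_edge i) w"
proof (induction n arbitrary: w)
  case (Suc n)
  show ?case using Suc.IH[of "_ # w"] by simp
qed (simp add: child_edge_def)

lemma class_law_Suc: "class_law p (Suc n) = map_pmf glue_six (list_pmf (replicate 6 (class_law p n)))"
proof -
  have root: "cert_class (Suc n) \<omega> [] = glue_six (map (\<lambda>\<omega>'. cert_class n \<omega>' [])
      (map (\<lambda>i. \<omega> \<circ> child_edge i) [0, 1, 2, 3, 4, 5]))" for \<omega>
    using cert_class_append[of n \<omega> "[]"] by simp
  have "class_law p (Suc n) = map_pmf (\<lambda>l. glue_six (map (\<lambda>\<omega>'. cert_class n \<omega>' []) l))
      (map_pmf (\<lambda>\<omega>. map (\<lambda>i. \<omega> \<circ> child_edge i) [0, 1, 2, 3, 4, 5])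
        (bond_pmf p (\<Union>i \<in> set [0, 1, 2, 3, 4, 5]. child_edges n i)))"
    unfolding class_law_def perc_measure_def sg_edges_Suc root by (simp add: bond_pmf_def pmf.map_comp o_def)
  also have "\<dots> = map_pmf glue_six
      (map_pmf (map (\<lambda>\<omega>'. cert_class n \<omega>' [])) (list_pmf (replicate 6 (bond_pmf p (sg_edges n)))))"
    by (subst bond_pmf_children) (simp_all add: replicate_6 pmf.map_comp o_def)
  also have "\<dots> = map_pmf glue_six (list_pmf (replicate 6 (class_law p n)))"
    by (simp add: map_list_pmf class_law_def perc_measure_def bond_pmf_def)
  finally show ?thesis .
qed

lemma set_class_law: "set_pmf (class_law p n) \<subseteq> {..<5}"
  by (auto simp: class_law_def cert_class_less)

lemma sum_class_law_Suc:
  assumes "finite U"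
  shows "sum (pmf (class_law p (Suc n))) U
    = prod_weight_sum {..<5} (replicate 6 (pmf (class_law p n))) (\<lambda>l. indicator U (glue_six l))"
proof -
  have "sum (pmf (class_law p (Suc n))) U
      = measure_pmf.prob (list_pmf (replicate 6 (class_law p n))) (glue_six -` U)"
    using assms by (simp add: measure_measure_pmf_finite[symmetric] class_law_Suc)
  also have "\<dots> = prod_weight_sum {..<5} (replicate 6 (pmf (class_law p n))) (indicator (glue_six -` U))"
    using set_class_law by (subst measure_list_pmf) auto
  finally show ?thesis unfolding indicator_vimage[abs_def] .
qed

lemma sum_class_law_0:
  assumes "finite U"
  shows "sum (pmf (class_law p 0)) U =
    prod_weight_sum UNIV [pmf (bernoulli_pmf p), pmf (bernoulli_pmf p), pmf (bernoulli_pmf p)]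
      (\<lambda>l. indicator U (link_class (l!0) (l!1) (l!2)))"
proof -
  let ?es = "[([] :: nat list, 0 :: nat), ([], 1), ([], 2)]"
  let ?B = "[bernoulli_pmf p, bernoulli_pmf p, bernoulli_pmf p]"
  have "sg_edges 0 = set ?es"
    by (auto simp: sg_edges_def)
  then have "class_law p 0 = map_pmf (\<lambda>l. link_class (l!0) (l!1) (l!2))
      (map_pmf (\<lambda>\<omega>. map \<omega> ?es) (Pi_pmf (set ?es) False (\<lambda>_. bernoulli_pmf p)))"
    by (simp add: class_law_def perc_measure_def pmf.map_comp o_def)
  also have "\<dots> = map_pmf (\<lambda>l. link_class (l!0) (l!1) (l!2)) (list_pmf ?B)"
    by (subst Pi_pmf_eq_list_pmf) simp_all
  finally have "sum (pmf (class_law p 0)) U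
      = measure_pmf.prob (list_pmf ?B) ((\<lambda>l. link_class (l!0) (l!1) (l!2)) -` U)"
    using assms by (simp add: measure_measure_pmf_finite[symmetric])
  also have "\<dots> = prod_weight_sum UNIV (map pmf ?B) (indicator ((\<lambda>l. link_class (l!0) (l!1) (l!2)) -` U))"
    by (rule measure_list_pmf) auto
  finally show ?thesis unfolding indicator_vimage[abs_def] by (simp only: list.map)
qed


section \<open>Domination at every level and the bound on \<open>p_S\<close>\<close>

lemma quarter_polynomial_bounds:
  fixes p :: real
  assumes "1/4 \<le> p" "p \<le> 1"
  shows "10/64 \<le> 3*p^2 - 2*p^3" and "19/64 \<le> p + p^2 - p^3"
    and "28/64 \<le> 2*p - p^2" and "37/64 \<le> 3*p - 3*p^2 + p^3"
proof -
  have q: "0 \<le> p - 1/4" using assms by simp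
  have "3*p^2 - 2*p^3 - 10/64 = (p - 1/4) * (p * (5/2 - 2*p) + 5/8)"
    by (simp add: field_simps power2_eq_square power3_eq_cube)
  moreover have "0 \<le> (p - 1/4) * (p * (5/2 - 2*p) + 5/8)"
    using q assms by simp
  ultimately show "10/64 \<le> 3*p^2 - 2*p^3" by linarith
  have "p^2 \<le> 1" using assms by (simp add: power_le_one)
  have "p + p^2 - p^3 - 19/64 = (p - 1/4) * (19/16 + 3*p/4 - p^2)"
    by (simp add: field_simps power2_eq_square power3_eq_cube)
  moreover have "0 \<le> (p - 1/4) * (19/16 + 3*p/4 - p^2)"
    using q assms \<open>p^2 \<le> 1\<close> by simp
  ultimately show "19/64 \<le> p + p^2 - p^3" by linarith
  have "2*p - p^2 - 28/64 = (p - 1/4) * (7/4 - p)"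
    by (simp add: field_simps power2_eq_square)
  moreover have "0 \<le> (p - 1/4) * (7/4 - p)"
    using q assms by simp
  ultimately show "28/64 \<le> 2*p - p^2" by linarith
  have "3*p - 3*p^2 + p^3 - 37/64 = (p - 1/4) * ((p - 11/8)^2 + 27/64)"
    by (simp add: field_simps power2_eq_square power3_eq_cube)
  moreover have "0 \<le> (p - 1/4) * ((p - 11/8)^2 + 27/64)"
    using q by simp
  ultimately show "37/64 \<le> 3*p - 3*p^2 + p^3" by linarith
qed

lemma upset_le_law_quarter_class_law_0:
  assumes "1/4 \<le> p" "p \<le> 1"
  shows "upset_le law_quarter (pmf (class_law p 0))"
proof -
  define f where "f U a b c = (indicator U (link_class a b c) :: real)" for U a b c
  have law: "sum (pmf (class_law p 0)) U =
      (1-p) * ((1-p) * ((1-p) * f U False False False + p * f U False False True)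
               + p * ((1-p) * f U False True False + p * f U False True True))
      + p * ((1-p) * ((1-p) * f U True False False + p * f U True False True)
               + p * ((1-p) * f U True True False + p * f U True True True))"
    if "finite U" for U
    using sum_class_law_0[OF that] assms
    by (simp add: UNIV_bool f_def indicator_def algebra_simps)
  have "sum (pmf (class_law p 0)) {4} = 3*p^2 - 2*p^3"
    and "sum (pmf (class_law p 0)) {1,4} = p + p^2 - p^3"
    and "sum (pmf (class_law p 0)) {2,4} = p + p^2 - p^3"
    and "sum (pmf (class_law p 0)) {3,4} = p + p^2 - p^3"
    and "sum (pmf (class_law p 0)) {1,2,4} = 2*p - p^2"
    and "sum (pmf (class_law p 0)) {1,3,4} = 2*p - p^2"
    and "sum (pmf (class_law p 0)) {2,3,4} = 2*p - p^2"
    and "sum (pmf (class_law p 0)) {1,2,3,4} = 3*p - 3*p^2 + p^3"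
    and "sum (pmf (class_law p 0)) {0,1,2,3,4} = 1"
    using assms by (simp_all only: law finite.emptyI finite_insert)
      (simp_all add: f_def link_class_def algebra_simps power2_eq_square power3_eq_cube)
  then show ?thesis
    using quarter_polynomial_bounds[OF assms]
    by (simp add: upset_le_def class_upsets_def law_quarter_def)
qed

lemma upset_le_law_quarter_class_law:
  assumes "1/4 \<le> p" "p \<le> 1"
  shows "upset_le law_quarter (pmf (class_law p n))"
proof (induction n)
  case 0
  show ?case by (rule upset_le_law_quarter_class_law_0[OF assms])
next
  case (Suc n)
  show ?case unfolding upset_le_def
  proof
    fix U assume U: "U \<in> set class_upsets"
    then have "finite U" "U \<subseteq> {..<5}" by (auto simp: class_upsets_def)
    have "sum law_quarter U \<le> sum law_step U"
      using upset_le_law_quarter_law_step U by (simp add: upset_le_def)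
    also have "\<dots> = (\<Sum>q<5. law_step q * indicator U q)"
      using \<open>U \<subseteq> {..<5}\<close> by (simp add: sum.inter_restrict indicator_def Int_absorb1)
    also have "\<dots> = prod_weight_sum {..<5} (replicate 6 law_quarter) (\<lambda>l. indicator U (glue_six l))"
      by (rule prod_weight_sum_law_quarter_glue_six[symmetric])
    also have "\<dots> \<le> prod_weight_sum {..<5} (replicate 6 (pmf (class_law p n))) (\<lambda>l. indicator U (glue_six l))"
    proof (rule prod_weight_sum_upset_le)
      show "list_all2 upset_le (replicate 6 law_quarter) (replicate 6 (pmf (class_law p n)))"
        using Suc by (simp add: replicate_6)
      show "nonneg_weights {..<5} (replicate 6 law_quarter)"
        by (simp add: nonneg_weights_def law_quarter_def)
      show "nonneg_weights {..<5} (replicate 6 (pmf (class_law p n)))"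
        by (simp add: nonneg_weights_def)
      fix l l' :: "nat list"
      assume "list_all2 class_le l l'" "length l = length (replicate 6 law_quarter)"
      then have "class_le (glue_six l) (glue_six l')" by (intro glue_six_mono) auto
      then show "indicator U (glue_six l) \<le> (indicator U (glue_six l') :: real)"
        using class_upsets_up_closed[OF U glue_six_less glue_six_less] by (auto simp: indicator_def)
    qed simp
    also have "\<dots> = sum (pmf (class_law p (Suc n))) U"
      by (rule sum_class_law_Suc[OF \<open>finite U\<close>, symmetric])
    finally show "sum law_quarter U \<le> sum (pmf (class_law p (Suc n))) U" .
  qed
qed

lemma crossing_prob_ge:
  assumes "1/4 \<le> p" "p \<le> 1"
  shows "19/64 \<le> crossing_prob p n"
proof -
  have "19/64 = sum law_quarter {1, 4}" by (simp add: law_quarter_def)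
  also have "\<dots> \<le> measure_pmf.prob (class_law p n) {1, 4}"
    using upset_le_law_quarter_class_law[OF assms, of n]
    by (simp add: upset_le_def class_upsets_def measure_measure_pmf_finite)
  also have "\<dots> = measure_pmf.prob (perc_measure p n) {\<omega>. links_xy (cert_class n \<omega> [])}"
    by (simp add: class_law_def links_xy_def vimage_def)
  also have "\<dots> \<le> crossing_prob p n"
    unfolding crossing_prob_def
    using cert_class_sound[of "[]" n] by (intro measure_pmf.finite_measure_mono) auto
  finally show ?thesis .
qed

lemma crossing_prob_0: "crossing_prob 0 n = 0"
proof -
  have "bernoulli_pmf 0 = return_pmf False"
    by (rule pmf_eqI) (simp add: pmf_bernoulli_True pmf_bernoulli_False split: split_indicator)
  then have "perc_measure 0 n = return_pmf (\<lambda>_. False)"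
    by (simp add: perc_measure_def finite_sg_edges)
  moreover have "sg_open_adj n (\<lambda>_. False) = {}"
    by (simp add: sg_open_adj_def)
  ultimately show ?thesis by (simp add: crossing_prob_def)
qed

lemma p_S_le:
  assumes "0 < c" and "\<And>p n. q \<le> p \<Longrightarrow> p \<le> 1 \<Longrightarrow> c \<le> crossing_prob p n"
  shows "p_S \<le> q"
  unfolding p_S_def
proof (rule cSup_least)
  show "{p \<in> {0..1}. (\<lambda>n. crossing_prob p n) \<longlonglongrightarrow> 0} \<noteq> {}"
  proof -
    have "(\<lambda>n. crossing_prob 0 n) = (\<lambda>n. 0)" by (simp add: crossing_prob_0)
    then have "0 \<in> {p \<in> {0..1}. (\<lambda>n. crossing_prob p n) \<longlonglongrightarrow> 0}" by simp
    then show ?thesis by blast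
  qed
  fix p assume p: "p \<in> {p \<in> {0..1}. (\<lambda>n. crossing_prob p n) \<longlonglongrightarrow> 0}"
  show "p \<le> q"
  proof (rule ccontr)
    assume "\<not> p \<le> q"
    then have "c \<le> 0"
      using p assms(2) by (intro LIMSEQ_le_const[of "\<lambda>n. crossing_prob p n"]) auto
    with \<open>0 < c\<close> show False by simp
  qed
qed

theorem theorem4p5:
  shows "p_S < 0.282"
proof -
  have "p_S \<le> 1/4"
  proof (rule p_S_le)
    show "(0::real) < 19/64" by simp
    show "19/64 \<le> crossing_prob p n" if "1/4 \<le> p" "p \<le> 1" for p n
      using crossing_prob_ge[OF that] .
  qed
  then show ?thesis by simp
qed

end
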